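(* Let $m\ge3$, let $O^m$ be the set of odd-parity $m$-bit strings and let $u=u_1\cdots u_m\in O^m$. Let $n\ge1$ and let $m$ parties (the first being Alice) hold $X_j=(x^j_1,\dots,x^j_n)\in\{0,1\}^n$, $j=1,\dots,m$, under the promise that $x_i^1\cdots x_i^m\in A$ for every $i$, where $A$ is any subset of $\{v\in O^m: v=u \text{ or the Hamming weight of } v\oplus u \text{ is an odd multiple of } 2\}$. Let $f_u(X_1,\dots,X_m)=\bigoplus_{i=1}^n t_u(x_i^1\cdots x_i^m)$ with $t_u(w)=1$ if $w=u$ and $0$ otherwise. Suppose the parties share $n$ copies of the GHZ state $|\psi_m^{GHZ}\rangle=(|0^m\rangle+|1^m\rangle)/\sqrt2$, the $j$-th qubit of each copy held by party $j$. Then there is a protocol in which, for each $i$, party $j$ applies to its qubit of the $i$-th copy the operator $H$ if $x_i^j=u_j$ and the operator $HR$ (first $R$, then $H$) if $x_i^j\ne u_j$, measures in the computational basis, performs local classical computation, and parties $2,\dots,m$ each send one classical bit to Alice ($m-1$ classical bits in total), after which Alice outputs $f_u(X_1,\dots,X_m)$ correctly for every input satisfying the promise.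
   Context: $H$ is the Hadamard gate $H|0\rangle=(|0\rangle+|1\rangle)/\sqrt2$, $H|1\rangle=(|0\rangle-|1\rangle)/\sqrt2$, and $R$ is the phase gate $R|0\rangle=|0\rangle$, $R|1\rangle=e^{i\pi/2}|1\rangle$. Communication consists only of classical bits sent to Alice; no quantum communication is allowed. *)

theory Defs
  imports Complex_Main
begin

text \<open>Parties are indexed 0,...,m-1; party 0 is Alice.
  A one-qubit operator is a 2x2 complex matrix given as a function
  (row index, column index), with the computational basis |0>, |1> indexed by False, True.\<close>

type_synonym qop = "bool \<Rightarrow> bool \<Rightarrow> complex"

definition hadamard :: qop where
  "hadamard b z = (if b \<and> z then - 1 else 1) / complex_of_real (sqrt 2)"

definition phaseR :: qop where
  "phaseR b z = (if b \<noteq> z then 0 else if b then \<i> else 1)"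

definition qop_mult :: "qop \<Rightarrow> qop \<Rightarrow> qop" where
  "qop_mult P Q b z = (\<Sum>k\<in>(UNIV::bool set). P b k * Q k z)"

definition HR :: qop where
  "HR = qop_mult hadamard phaseR"

definition ghz :: "nat \<Rightarrow> bool list \<Rightarrow> complex" where
  "ghz m z = (if (\<forall>j<m. \<not> z ! j) \<or> (\<forall>j<m. z ! j)
              then 1 / complex_of_real (sqrt 2) else 0)"

text \<open>Amplitude <b| (U_0 \<otimes> ... \<otimes> U_{m-1}) |GHZ_m> of outcome string b (length m).\<close>
definition ghz_amp :: "nat \<Rightarrow> (nat \<Rightarrow> qop) \<Rightarrow> bool list \<Rightarrow> complex" where
  "ghz_amp m U b = (\<Sum>z\<in>{z. length z = m}. (\<Prod>j<m. U j (b ! j) (z ! j)) * ghz m z)"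

definition party_op :: "bool list \<Rightarrow> nat \<Rightarrow> bool \<Rightarrow> qop" where
  "party_op u j x = (if x = u ! j then hadamard else HR)"

definition column :: "nat \<Rightarrow> (nat \<Rightarrow> bool list) \<Rightarrow> nat \<Rightarrow> bool list" where
  "column m X i = map (\<lambda>j. X j ! i) [0..<m]"

text \<open>Probability of the joint computational-basis outcome B (B j = outcomes of party j
  on its n qubits) on the n GHZ copies after the local operators. The n-copy state and the
  applied operator are tensor products over the copies, so the amplitude is the product of
  per-copy amplitudes.\<close>
definition outcome_prob :: "nat \<Rightarrow> nat \<Rightarrow> bool list \<Rightarrow> (nat \<Rightarrow> bool list) \<Rightarrow> (nat \<Rightarrow> bool list) \<Rightarrow> real" where
  "outcome_prob m n u X B =
     (\<Prod>i<n. (cmod (ghz_amp m (\<lambda>j. party_op u j (X j ! i)) (column m B i)))\<^sup>2)"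

definition odd_parity :: "bool list \<Rightarrow> bool" where
  "odd_parity v = odd (card {j. j < length v \<and> v ! j})"

definition hamming_xor :: "bool list \<Rightarrow> bool list \<Rightarrow> nat" where
  "hamming_xor v w = card {j. j < length v \<and> v ! j \<noteq> w ! j}"

definition t_fun :: "bool list \<Rightarrow> bool list \<Rightarrow> bool" where
  "t_fun u w = (w = u)"

fun f_u :: "nat \<Rightarrow> bool list \<Rightarrow> (nat \<Rightarrow> bool list) \<Rightarrow> nat \<Rightarrow> bool" where
  "f_u m u X 0 = False"
| "f_u m u X (Suc i) = (f_u m u X i \<noteq> t_fun u (column m X i))"

end

(*
  Party j's operator has entries <b|U|0> = 1/sqrt 2 and <b|U|1> = (-1)^b i^[x_j ~= u_j]/sqrt 2,
  so on one GHZ copy with input column v the outcome b has amplitude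
  (1 + (-1)^|b| i^d(v,u)) / sqrt 2^(m+1). The promise gives d(v,u) = 0 or d(v,u) = 2 mod 4,
  hence every outcome that occurs has |b| even exactly when v = u. So f_u is the parity of
  n + sum_i |b_i| = n + sum_j |B_j|, which Alice computes from her own outcomes and the
  outcome parities sent by the other parties.
*)
theory Submission
  imports Defs
begin

definition hamming_weight :: "bool list \<Rightarrow> nat" where
  "hamming_weight v = card {j. j < length v \<and> v ! j}"

lemma hamming_weight_eq_sum: "hamming_weight v = (\<Sum>j<length v. of_bool (v ! j))"
  by (simp add: hamming_weight_def lessThan_def Collect_conj_eq)

lemma hamming_weight_map_upt: "hamming_weight (map f [a..<b]) = card {j \<in> {a..<b}. f j}"
proof -
  have "{j \<in> {a..<b}. f j} = (\<lambda>j. a + j) ` {j. j < b - a \<and> f (a + j)}"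
  proof (intro equalityI subsetI)
    fix j
    assume "j \<in> {j \<in> {a..<b}. f j}"
    then show "j \<in> (\<lambda>j. a + j) ` {j. j < b - a \<and> f (a + j)}"
      by (auto intro!: image_eqI[where x = "j - a"])
  qed auto
  then show ?thesis
    by (simp add: hamming_weight_def card_image cong: conj_cong)
qed

lemma length_column [simp]: "length (column m X i) = m"
  by (simp add: column_def)

lemma nth_column [simp]: "j < m \<Longrightarrow> column m X i ! j = X j ! i"
  by (simp add: column_def)

lemma party_op_apply:
  "party_op u j x b z =
     (if b \<and> z then - 1 else 1) * (if z \<and> x \<noteq> u ! j then \<i> else 1) / complex_of_real (sqrt 2)"
  by (cases b; cases z)
     (simp_all add: party_op_def HR_def qop_mult_def hadamard_def phaseR_def UNIV_bool)

lemma ghz_amp_eq: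
  assumes "m \<ge> 1"
  shows "ghz_amp m U b =
           ((\<Prod>j<m. U j (b ! j) False) + (\<Prod>j<m. U j (b ! j) True)) / complex_of_real (sqrt 2)"
proof -
  let ?f = "\<lambda>z. (\<Prod>j<m. U j (b ! j) (z ! j)) * ghz m z"
  have support: "?f z = 0" if "length z = m" "z \<notin> {replicate m False, replicate m True}" for z
  proof -
    have "\<not> ((\<forall>j<m. \<not> z ! j) \<or> (\<forall>j<m. z ! j))"
      using that by (auto simp: list_eq_iff_nth_eq)
    then have "ghz m z = 0"
      by (simp add: ghz_def)
    then show ?thesis
      by simp
  qed
  have "ghz_amp m U b = sum ?f {replicate m False, replicate m True}"
    unfolding ghz_amp_def
    using support finite_lists_length_eq[of "UNIV :: bool set" m]
    by (intro sum.mono_neutral_right) auto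
  also have "\<dots> = ?f (replicate m False) + ?f (replicate m True)"
    using assms by (cases m) auto
  finally show ?thesis
    by (simp add: ghz_def add_divide_distrib)
qed

lemma ghz_amp_cong: "(\<And>j. j < m \<Longrightarrow> U j = V j) \<Longrightarrow> ghz_amp m U b = ghz_amp m V b"
  by (simp add: ghz_amp_def)

lemma prod_lessThan_if_const:
  fixes m :: nat
  shows "(\<Prod>j<m. if P j then c else 1) = c ^ card {j. j < m \<and> P j}"
proof -
  have "(\<Prod>j<m. if P j then c else 1) = c ^ card ({..<m} \<inter> {j. P j})"
    unfolding prod.If_cases[OF finite_lessThan] by simp
  also have "{..<m} \<inter> {j. P j} = {j. j < m \<and> P j}"
    by auto
  finally show ?thesis .
qed

lemma ghz_amp_party_op:
  assumes "m \<ge> 1" and "length b = m" and "length v = m"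
  shows "ghz_amp m (\<lambda>j. party_op u j (v ! j)) b =
           (1 + (- 1) ^ hamming_weight b * \<i> ^ hamming_xor v u) / complex_of_real (sqrt 2) ^ (m + 1)"
proof -
  have "(\<Prod>j<m. party_op u j (v ! j) (b ! j) True) =
          (\<Prod>j<m. if b ! j then - 1 else 1) * (\<Prod>j<m. if v ! j \<noteq> u ! j then \<i> else 1)
            / complex_of_real (sqrt 2) ^ m"
    by (simp add: party_op_apply prod_dividef prod.distrib)
  also have "\<dots> = (- 1) ^ hamming_weight b * \<i> ^ hamming_xor v u / complex_of_real (sqrt 2) ^ m"
    using assms(2,3) by (simp only: prod_lessThan_if_const hamming_weight_def hamming_xor_def)
  finally show ?thesis
    by (simp add: ghz_amp_eq[OF assms(1)] party_op_apply prod_dividef add_divide_distrib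
        power_one_over power_Suc2 del: power_Suc)
qed

lemma promise_eq_iff_even_outcome_weight:
  assumes "m \<ge> 1" and "length b = m" and "length v = m"
    and promise: "v = u \<or> (\<exists>k. hamming_xor v u = 2 * (2 * k + 1))"
    and amp: "ghz_amp m (\<lambda>j. party_op u j (v ! j)) b \<noteq> 0"
  shows "v = u \<longleftrightarrow> even (hamming_weight b)"
proof -
  have phase: "(- 1) ^ hamming_weight b * \<i> ^ hamming_xor v u \<noteq> (- 1 :: complex)"
    using amp by (simp add: ghz_amp_party_op[OF assms(1-3)] add_eq_0_iff)
  show ?thesis
  proof (cases "v = u")
    case True
    then have "(- 1 :: complex) ^ hamming_weight b \<noteq> - 1"
      using phase by (simp add: hamming_xor_def)
    then have "even (hamming_weight b)"
      using neg_one_odd_power by blast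
    with True show ?thesis
      by simp
  next
    case False
    with promise obtain k where "hamming_xor v u = 2 * (2 * k + 1)"
      by blast
    then have "\<i> ^ hamming_xor v u = - 1"
      by (simp add: power_mult)
    with False phase show ?thesis
      by auto
  qed
qed

lemma outcome_prob_pos_imp_ghz_amp_nonzero:
  assumes "outcome_prob m n u X B > 0" and "i < n"
  shows "ghz_amp m (\<lambda>j. party_op u j (X j ! i)) (column m B i) \<noteq> 0"
proof
  assume "ghz_amp m (\<lambda>j. party_op u j (X j ! i)) (column m B i) = 0"
  then have "outcome_prob m n u X B = 0"
    unfolding outcome_prob_def using assms(2) by (intro prod_zero) auto
  with assms(1) show False
    by simp
qed

lemma f_u_iff_odd_card: "f_u m u X n \<longleftrightarrow> odd (card {i. i < n \<and> column m X i = u})"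
proof (induction n)
  case 0
  then show ?case
    by simp
next
  case (Suc n)
  have "{i. i < Suc n \<and> column m X i = u} =
          {i. i < n \<and> column m X i = u} \<union> (if column m X n = u then {n} else {})"
    by (auto simp: less_Suc_eq)
  with Suc show ?case
    by (simp add: t_fun_def)
qed

lemma odd_card_even_iff:
  fixes c :: "'a \<Rightarrow> nat"
  assumes "finite I"
  shows "odd (card {i \<in> I. even (c i)}) \<longleftrightarrow> odd (card I + sum c I)"
proof -
  have "card I = card {i \<in> I. even (c i)} + card {i \<in> I. odd (c i)}"
    using assms by (subst card_Un_disjoint[symmetric]) (auto intro: arg_cong[where f = card])
  then show ?thesis
    using even_sum_iff[OF assms, of c] by presburger
qed

lemma sum_hamming_weight_column:
  assumes "\<forall>j<m. length (B j) = n"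
  shows "(\<Sum>i<n. hamming_weight (column m B i)) = (\<Sum>j<m. hamming_weight (B j))"
proof -
  have "(\<Sum>i<n. hamming_weight (column m B i)) = (\<Sum>i<n. \<Sum>j<m. of_bool (B j ! i))"
    by (simp add: hamming_weight_eq_sum del: sum_of_bool_eq)
  also have "\<dots> = (\<Sum>j<m. \<Sum>i<n. of_bool (B j ! i))"
    by (rule sum.swap)
  also have "\<dots> = (\<Sum>j<m. hamming_weight (B j))"
    using assms by (simp add: hamming_weight_eq_sum del: sum_of_bool_eq)
  finally show ?thesis .
qed

lemma odd_sum_iff_first_and_parities:
  fixes S :: "nat \<Rightarrow> nat"
  assumes "m \<ge> 1"
  shows "odd (\<Sum>j<m. S j) \<longleftrightarrow> odd (S 0 + hamming_weight (map (\<lambda>j. odd (S j)) [1..<m]))"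
proof -
  have "(\<Sum>j<m. S j) = S 0 + (\<Sum>j\<in>{1..<m}. S j)"
    using assms by (simp add: lessThan_atLeast0 sum.atLeast_Suc_lessThan)
  then show ?thesis
    by (simp add: hamming_weight_map_upt even_sum_iff)
qed

theorem theorem5:
  fixes m n :: nat and u :: "bool list" and A :: "bool list set"
  assumes "m \<ge> 3" and "length u = m" and "odd_parity u" and "n \<ge> 1"
    and "A \<subseteq> {v. length v = m \<and> odd_parity v \<and>
                    (v = u \<or> (\<exists>k. hamming_xor v u = 2 * (2 * k + 1)))}"
  shows "\<exists>(send :: nat \<Rightarrow> bool list \<Rightarrow> bool list \<Rightarrow> bool)
            (out :: bool list \<Rightarrow> bool list \<Rightarrow> bool list \<Rightarrow> bool).
    \<forall>X B. (\<forall>j<m. length (X j) = n) \<longrightarrow> (\<forall>i<n. column m X i \<in> A) \<longrightarrow>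
          (\<forall>j<m. length (B j) = n) \<longrightarrow> outcome_prob m n u X B > 0 \<longrightarrow>
          out (X 0) (B 0) (map (\<lambda>j. send j (X j) (B j)) [1..<m]) = f_u m u X n"
proof (rule exI[of _ "\<lambda>_ _ b. odd (hamming_weight b)"],
    rule exI[of _ "\<lambda>_ b\<^sub>0 bits. odd (n + hamming_weight b\<^sub>0 + hamming_weight bits)"],
    intro allI impI)
  fix X B
  assume inputs: "\<forall>i<n. column m X i \<in> A" and outcomes: "\<forall>j<m. length (B j) = n"
    and possible: "outcome_prob m n u X B > 0"
  have m: "m \<ge> 1"
    using assms(1) by simp
  have copy: "column m X i = u \<longleftrightarrow> even (hamming_weight (column m B i))" if "i < n" for i
    using that inputs assms(5) outcome_prob_pos_imp_ghz_amp_nonzero[OF possible that]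
    by (intro promise_eq_iff_even_outcome_weight[OF m]) (auto cong: ghz_amp_cong)
  have "f_u m u X n \<longleftrightarrow> odd (card {i. i < n \<and> even (hamming_weight (column m B i))})"
    by (simp add: f_u_iff_odd_card copy cong: conj_cong)
  also have "\<dots> \<longleftrightarrow> odd (n + (\<Sum>j<m. hamming_weight (B j)))"
    using odd_card_even_iff[of "{..<n}"] sum_hamming_weight_column[OF outcomes]
    by (simp add: lessThan_def)
  also have "\<dots> \<longleftrightarrow> odd (n + hamming_weight (B 0) +
                        hamming_weight (map (\<lambda>j. odd (hamming_weight (B j))) [1..<m]))"
    using odd_sum_iff_first_and_parities[OF m, of "\<lambda>j. hamming_weight (B j)"] by presburger
  finally show "odd (n + hamming_weight (B 0) + hamming_weight
                  (map (\<lambda>j. odd (hamming_weight (B j))) [1..<m])) = f_u m u X n"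
    by simp
qed

end
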